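(* Assume the setting and the CRAIG recurrence described in the context, and let $k\ge1$ be such that $q_1,\dots,q_k$, $v_1,\dots,v_k$, $t_1,\dots,t_k$, $r_1,\dots,r_k$, $\alpha_1,\dots,\alpha_k$, $\beta_2,\dots,\beta_k$ and $g_k$ are defined. Define $Q_k=[q_1,\dots,q_k]$, $V_k=[v_1,\dots,v_k]$, $T_k=[t_1,\dots,t_k]$, $D_k=[r_1/\alpha_1,\dots,r_k/\alpha_k]$, and let $B_k\in\mathbb{R}^{k\times k}$ be upper bidiagonal with diagonal entries $(B_k)_{ii}=\alpha_i$ and superdiagonal entries $(B_k)_{i,i+1}=\beta_{i+1}$. Then $Q_k=D_kB_k$, $AQ_k=MV_kB_k$, $CQ_k=T_kB_k$, $V_k^TMV_k+D_k^TT_k=I_k$, $Q_k^TNQ_k=I_k$, and $A^TV_k+T_k=NQ_kB_k^T+Ng_ke_k^T$, where $e_k$ is the $k$-th unit vector in $\mathbb{R}^k$. Consequently, with $S=A^TM^{-1}A+C$, $N^{-1}SQ_k=Q_k(B_k^TB_k)+\alpha_k g_ke_k^T$, i.e. the recurrence implicitly performs the Lanczos tridiagonalization of the preconditioned Schur complement.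
   Context: Setting: $M\in\mathbb{R}^{m\times m}$ is symmetric positive definite, $A\in\mathbb{R}^{m\times n}$ ($n\le m$) has full column rank, $C\in\mathbb{R}^{n\times n}$ is symmetric positive semidefinite, $b\in\mathbb{R}^n$ is nonzero, and $N\in\mathbb{R}^{n\times n}$ is symmetric positive definite (the preconditioner). For a symmetric positive definite $G$ write $\|x\|_G=(x^TGx)^{1/2}$. The generalized saddle point system is $Mu+Ap=0$, $A^Tu-Cp=b$, with unique solution $(u_*,p_* )$; $S=A^TM^{-1}A+C$. CRAIG recurrence (exact arithmetic): Initialization: $\beta_1=\|b\|_{N^{-1}}$, $q_1=N^{-1}b/\beta_1$, $r_1=q_1$, $w_1=M^{-1}Aq_1$, $s_1=Cr_1$, $\alpha_1=(w_1^TMw_1+r_1^Ts_1)^{1/2}$, $v_1=w_1/\alpha_1$, $t_1=s_1/\alpha_1$, $\zeta_1=\beta_1/\alpha_1$, $u^{(1)}=\zeta_1v_1$, $p^{(1)}=-(\zeta_1/\alpha_1)r_1$. For $k=1,2,\dots$: $g_k=N^{-1}(A^Tv_k+t_k)-\alpha_kq_k$, $\beta_{k+1}=\|g_k\|_N$; if $\beta_{k+1}=0$ the recurrence stops; otherwise $q_{k+1}=g_k/\beta_{k+1}$, $w_{k+1}=M^{-1}Aq_{k+1}-\beta_{k+1}v_k$, $r_{k+1}=q_{k+1}-(\beta_{k+1}/\alpha_k)r_k$, $s_{k+1}=Cr_{k+1}$, $\alpha_{k+1}=(w_{k+1}^TMw_{k+1}+r_{k+1}^Ts_{k+1})^{1/2}$,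 $v_{k+1}=w_{k+1}/\alpha_{k+1}$, $t_{k+1}=s_{k+1}/\alpha_{k+1}$, $\zeta_{k+1}=-(\beta_{k+1}/\alpha_{k+1})\zeta_k$, $u^{(k+1)}=u^{(k)}+\zeta_{k+1}v_{k+1}$, $p^{(k+1)}=p^{(k)}-(\zeta_{k+1}/\alpha_{k+1})r_{k+1}$. *)

theory Defs
  imports "Jordan_Normal_Form.Matrix"
begin

definition minv :: "real mat \<Rightarrow> real mat" where
  "minv G = (SOME X. X \<in> carrier_mat (dim_row G) (dim_row G) \<and>
              G * X = 1\<^sub>m (dim_row G) \<and> X * G = 1\<^sub>m (dim_row G))"

definition spd :: "nat \<Rightarrow> real mat \<Rightarrow> bool" where
  "spd d G \<longleftrightarrow> G \<in> carrier_mat d d \<and> transpose_mat G = G \<and>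
     (\<forall>x\<in>carrier_vec d. x \<noteq> 0\<^sub>v d \<longrightarrow> x \<bullet> (G *\<^sub>v x) > 0)"

definition spsd :: "nat \<Rightarrow> real mat \<Rightarrow> bool" where
  "spsd d G \<longleftrightarrow> G \<in> carrier_mat d d \<and> transpose_mat G = G \<and>
     (\<forall>x\<in>carrier_vec d. x \<bullet> (G *\<^sub>v x) \<ge> 0)"

definition full_col_rank :: "nat \<Rightarrow> nat \<Rightarrow> real mat \<Rightarrow> bool" where
  "full_col_rank m n A \<longleftrightarrow> A \<in> carrier_mat m n \<and>
     (\<forall>x\<in>carrier_vec n. A *\<^sub>v x = 0\<^sub>v m \<longrightarrow> x = 0\<^sub>v n)"

definition gnorm :: "real mat \<Rightarrow> real vec \<Rightarrow> real" where
  "gnorm G x = sqrt (x \<bullet> (G *\<^sub>v x))"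

record craig_state =
  cq :: "real vec"
  cw :: "real vec"
  cr :: "real vec"
  cs :: "real vec"
  calpha :: real
  cv :: "real vec"
  ct :: "real vec"
  cbeta :: real
  czeta :: real
  cu :: "real vec"
  cp :: "real vec"

(* craig M A C N b j = iterates with index j+1 (0-based storage of 1-based index).
   Division by zero is HOL's x/0 = 0; the theorem assumes the relevant quantities
   are nonzero, i.e. that the recurrence has not stopped. *)
fun craig :: "real mat \<Rightarrow> real mat \<Rightarrow> real mat \<Rightarrow> real mat \<Rightarrow> real vec \<Rightarrow> nat \<Rightarrow> craig_state"
  where
  "craig M A C N b 0 =
    (let \<beta> = gnorm (minv N) b;
         q = (1/\<beta>) \<cdot>\<^sub>v (minv N *\<^sub>v b);
         r = q;
         w = minv M *\<^sub>v (A *\<^sub>v q);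
         s = C *\<^sub>v r;
         \<alpha> = sqrt (w \<bullet> (M *\<^sub>v w) + r \<bullet> s);
         v = (1/\<alpha>) \<cdot>\<^sub>v w;
         t = (1/\<alpha>) \<cdot>\<^sub>v s;
         \<zeta> = \<beta>/\<alpha>;
         u = \<zeta> \<cdot>\<^sub>v v;
         p = (-(\<zeta>/\<alpha>)) \<cdot>\<^sub>v r
     in \<lparr>cq = q, cw = w, cr = r, cs = s, calpha = \<alpha>, cv = v, ct = t,
         cbeta = \<beta>, czeta = \<zeta>, cu = u, cp = p\<rparr>)"
| "craig M A C N b (Suc j) =
    (let st = craig M A C N b j;
         g = minv N *\<^sub>v (transpose_mat A *\<^sub>v cv st + ct st) - calpha st \<cdot>\<^sub>v cq st;
         \<beta> = gnorm N g;
         q = (1/\<beta>) \<cdot>\<^sub>v g;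
         w = minv M *\<^sub>v (A *\<^sub>v q) - \<beta> \<cdot>\<^sub>v cv st;
         r = q - (\<beta> / calpha st) \<cdot>\<^sub>v cr st;
         s = C *\<^sub>v r;
         \<alpha> = sqrt (w \<bullet> (M *\<^sub>v w) + r \<bullet> s);
         v = (1/\<alpha>) \<cdot>\<^sub>v w;
         t = (1/\<alpha>) \<cdot>\<^sub>v s;
         \<zeta> = -(\<beta>/\<alpha>) * czeta st;
         u = cu st + \<zeta> \<cdot>\<^sub>v v;
         p = cp st - (\<zeta>/\<alpha>) \<cdot>\<^sub>v r
     in \<lparr>cq = q, cw = w, cr = r, cs = s, calpha = \<alpha>, cv = v, ct = t,
         cbeta = \<beta>, czeta = \<zeta>, cu = u, cp = p\<rparr>)"

(* g_j (1-based j), computed from the state with index j *)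
definition craig_g :: "real mat \<Rightarrow> real mat \<Rightarrow> real mat \<Rightarrow> real mat \<Rightarrow> real vec \<Rightarrow> nat \<Rightarrow> real vec"
  where "craig_g M A C N b j =
    (let st = craig M A C N b (j - 1) in
       minv N *\<^sub>v (transpose_mat A *\<^sub>v cv st + ct st) - calpha st \<cdot>\<^sub>v cq st)"

end

theory Submission
  imports Defs "Jordan_Normal_Form.Determinant"
begin

(* Write d_j = r_j / alpha_j.  The recurrence is Golub-Kahan bidiagonalization of the map
   K q = (M^-1 A q, q) from R^n with the N-inner product to pairs (v, d) with the
   semi-inner product v^T M v' + d^T C d', whose adjoint is K^* (v, d) = N^-1 (A^T v + C d):
   the updates of w and r say alpha_j (v_j, d_j) = K q_j - beta_j (v_(j-1), d_(j-1)), and since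
   t_j = C d_j the update of g says beta_(j+1) q_(j+1) = K^* (v_j, d_j) - alpha_j q_j.  Read
   column by column, these two three-term recurrences are Q = D B, A Q = M V B, C Q = T B and
   A^T V + T = N Q B^T + N g_k e_k^T; orthonormality of both families follows by the usual
   coupled induction.  Finally S Q = A^T V B + T B = (A^T V + T) B, and e_k^T B = alpha_k e_k^T
   gives the Lanczos relation. *)

(* The superdiagonal entry in column j is c j, so c 0 is never used. *)
definition upper_bidiag :: "nat \<Rightarrow> (nat \<Rightarrow> 'a) \<Rightarrow> (nat \<Rightarrow> 'a) \<Rightarrow> 'a :: zero mat" where
  "upper_bidiag k a c = mat k k (\<lambda>(i, j). if j = i then a i else if j = i + 1 then c j else 0)"

lemma upper_bidiag_carrier [simp]: "upper_bidiag k a c \<in> carrier_mat k k"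
  and dim_row_upper_bidiag [simp]: "dim_row (upper_bidiag k a c) = k"
  and dim_col_upper_bidiag [simp]: "dim_col (upper_bidiag k a c) = k"
  unfolding upper_bidiag_def by simp_all

lemma mult_mat_vec_unit_vec:
  fixes X :: "'a :: semiring_1 mat"
  assumes "X \<in> carrier_mat nr nc" and "l < nc"
  shows "X *\<^sub>v unit_vec nc l = col X l"
  using assms by (intro eq_vecI) auto

lemma col_upper_bidiag:
  fixes a c :: "nat \<Rightarrow> 'a :: semiring_1"
  assumes "j < k"
  shows "col (upper_bidiag k a c) j =
    a j \<cdot>\<^sub>v unit_vec k j + (if j = 0 then 0\<^sub>v k else c j \<cdot>\<^sub>v unit_vec k (j - 1))"
  using assms by (intro eq_vecI) (auto simp: upper_bidiag_def unit_vec_def)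

lemma row_upper_bidiag:
  fixes a c :: "nat \<Rightarrow> 'a :: semiring_1"
  assumes "j < k"
  shows "row (upper_bidiag k a c) j =
    a j \<cdot>\<^sub>v unit_vec k j + (if Suc j < k then c (Suc j) \<cdot>\<^sub>v unit_vec k (Suc j) else 0\<^sub>v k)"
  using assms by (intro eq_vecI) (auto simp: upper_bidiag_def unit_vec_def)

lemma col_mult_upper_bidiag:
  fixes X :: "'a :: field mat"
  assumes X: "X \<in> carrier_mat nr k" and j: "j < k"
  shows "col (X * upper_bidiag k a c) j =
    a j \<cdot>\<^sub>v col X j + (if j = 0 then 0\<^sub>v nr else c j \<cdot>\<^sub>v col X (j - 1))"
proof -
  have "col (X * upper_bidiag k a c) j = X *\<^sub>v col (upper_bidiag k a c) j"
    using col_mult2[OF X upper_bidiag_carrier j] .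
  then show ?thesis
    using X j by (cases "j = 0")
      (auto simp: col_upper_bidiag mult_add_distrib_mat_vec mult_mat_vec mult_mat_vec_unit_vec)
qed

lemma col_mult_transpose_upper_bidiag:
  fixes X :: "'a :: field mat"
  assumes X: "X \<in> carrier_mat nr k" and j: "j < k"
  shows "col (X * transpose_mat (upper_bidiag k a c)) j =
    a j \<cdot>\<^sub>v col X j + (if Suc j < k then c (Suc j) \<cdot>\<^sub>v col X (Suc j) else 0\<^sub>v nr)"
proof -
  have "transpose_mat (upper_bidiag k a c) \<in> carrier_mat k k" by simp
  then have "col (X * transpose_mat (upper_bidiag k a c)) j = X *\<^sub>v row (upper_bidiag k a c) j"
    using col_mult2[OF X _ j] j by simp
  then show ?thesis
    using X j by (cases "Suc j < k")
      (auto simp: row_upper_bidiag mult_add_distrib_mat_vec mult_mat_vec mult_mat_vec_unit_vec)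
qed

lemma last_unit_row_mult_upper_bidiag:
  fixes a c :: "nat \<Rightarrow> 'a :: semiring_1"
  assumes "k \<ge> 1"
  shows "mat_of_rows k [unit_vec k (k - 1)] * upper_bidiag k a c =
    a (k - 1) \<cdot>\<^sub>m mat_of_rows k [unit_vec k (k - 1)]"
proof (rule eq_matI)
  fix i j assume "i < dim_row (a (k - 1) \<cdot>\<^sub>m mat_of_rows k [unit_vec k (k - 1)])"
    and "j < dim_col (a (k - 1) \<cdot>\<^sub>m mat_of_rows k [unit_vec k (k - 1)])"
  then have i: "i = 0" and j: "j < k" by auto
  have "(mat_of_rows k [unit_vec k (k - 1)] * upper_bidiag k a c) $$ (i, j) =
      unit_vec k (k - 1) \<bullet> col (upper_bidiag k a c) j"
    using i j by simp
  also have "\<dots> = upper_bidiag k a c $$ (k - 1, j)"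
    using assms j by simp
  finally show "(mat_of_rows k [unit_vec k (k - 1)] * upper_bidiag k a c) $$ (i, j) =
      (a (k - 1) \<cdot>\<^sub>m mat_of_rows k [unit_vec k (k - 1)]) $$ (i, j)"
    using assms i j by (auto simp: upper_bidiag_def mat_of_rows_def)
qed auto

lemma col_outer_unit_vec:
  fixes x :: "'a :: semiring_1 vec"
  assumes "x \<in> carrier_vec nr" and "l < k" and "j < k"
  shows "col (mat_of_cols nr [x] * mat_of_rows k [unit_vec k l]) j = (if j = l then x else 0\<^sub>v nr)"
  using assms by (intro eq_vecI) (auto simp: mat_of_cols_def mat_of_rows_def scalar_prod_def)

lemma spd_minv:
  assumes "spd d G"
  shows "minv G \<in> carrier_mat d d" and "G * minv G = 1\<^sub>m d" and "minv G * G = 1\<^sub>m d"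
proof -
  have G: "G \<in> carrier_mat d d" using assms unfolding spd_def by auto
  have "det G \<noteq> 0"
  proof
    assume "det G = 0"
    then obtain v where v: "v \<in> carrier_vec d" "v \<noteq> 0\<^sub>v d" "G *\<^sub>v v = 0\<^sub>v d"
      using det_0_iff_vec_prod_zero[OF G] by auto
    have "v \<bullet> (G *\<^sub>v v) > 0" using assms v unfolding spd_def by auto
    then show False using v by simp
  qed
  from det_non_zero_imp_unit[OF G this, of undefined]
  obtain X where "X \<in> carrier_mat d d" "G * X = 1\<^sub>m d" "X * G = 1\<^sub>m d"
    unfolding Units_def ring_mat_def by auto
  then have "\<exists>X. X \<in> carrier_mat (dim_row G) (dim_row G) \<and>
      G * X = 1\<^sub>m (dim_row G) \<and> X * G = 1\<^sub>m (dim_row G)"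
    using G by auto
  from someI_ex[OF this] G
  show "minv G \<in> carrier_mat d d" and "G * minv G = 1\<^sub>m d" and "minv G * G = 1\<^sub>m d"
    unfolding minv_def by auto
qed

lemma spd_quadratic_form_nonneg:
  assumes "spd d G" and "x \<in> carrier_vec d"
  shows "0 \<le> x \<bullet> (G *\<^sub>v x)"
proof (cases "x = 0\<^sub>v d")
  case True
  moreover have "G *\<^sub>v 0\<^sub>v d \<in> carrier_vec d"
    using assms(1) unfolding spd_def by auto
  ultimately show ?thesis by simp
next
  case False
  then show ?thesis using assms unfolding spd_def by force
qed

lemma scalar_prod_sym_mat:
  fixes G :: "'a :: comm_semiring_0 mat"
  assumes "G \<in> carrier_mat d d" and "transpose_mat G = G"
    and "x \<in> carrier_vec d" and "y \<in> carrier_vec d"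
  shows "(G *\<^sub>v x) \<bullet> y = x \<bullet> (G *\<^sub>v y)"
  using transpose_vec_mult_scalar[of G d d y x] assms by simp

lemma scalar_prod_sym_mat_comm:
  fixes G :: "'a :: comm_semiring_0 mat"
  assumes G: "G \<in> carrier_mat d d" and sym: "transpose_mat G = G"
    and x: "x \<in> carrier_vec d" and y: "y \<in> carrier_vec d"
  shows "x \<bullet> (G *\<^sub>v y) = y \<bullet> (G *\<^sub>v x)"
proof -
  have "G *\<^sub>v y \<in> carrier_vec d" using G y by simp
  then show ?thesis using scalar_prod_sym_mat[OF G sym y x] comm_scalar_prod[OF _ x] by metis
qed

lemma scalar_prod_transpose_mat_vec:
  fixes A :: "'a :: comm_semiring_0 mat"
  assumes A: "A \<in> carrier_mat m n" and x: "x \<in> carrier_vec n" and y: "y \<in> carrier_vec m"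
  shows "x \<bullet> (transpose_mat A *\<^sub>v y) = (A *\<^sub>v x) \<bullet> y"
  using transpose_vec_mult_scalar[OF A x y] A x y
  by (simp add: comm_scalar_prod[of x n] comm_scalar_prod[of y m])

lemma index_transpose_mult_mult:
  fixes X G Z :: "'a :: comm_semiring_1 mat"
  assumes X: "X \<in> carrier_mat d k" and G: "G \<in> carrier_mat d d" and Z: "Z \<in> carrier_mat d l"
    and i: "i < k" and j: "j < l"
  shows "(transpose_mat X * G * Z) $$ (i, j) = col X i \<bullet> (G *\<^sub>v col Z j)"
proof -
  have "transpose_mat X * G * Z = transpose_mat X * (G * Z)"
    using X G Z by (simp add: assoc_mult_mat[of _ k d])
  then show ?thesis using X G Z i j col_mult2[OF G Z j] by simp
qed

(* For B = upper_bidiag k a c, the hypotheses on Z say B^T Y = Z = P B^T, the latter except in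
   the last column. *)
lemma golub_kahan_orthonormality:
  fixes P Y Z :: "nat \<Rightarrow> nat \<Rightarrow> 'a :: field" and a c :: "nat \<Rightarrow> 'a"
  assumes P_sym: "\<And>i j. P i j = P j i" and Y_sym: "\<And>i j. Y i j = Y j i"
    and Z_Y: "\<And>i j. i < k \<Longrightarrow> j < k \<Longrightarrow>
      Z i j = a i * Y i j + (if i = 0 then 0 else c i * Y (i - 1) j)"
    and Z_P: "\<And>i j. Suc j < k \<Longrightarrow> Z i j = a j * P i j + c (Suc j) * P i (Suc j)"
    and P_diag: "\<And>j. j < k \<Longrightarrow> P j j = 1" and Y_diag: "\<And>j. j < k \<Longrightarrow> Y j j = 1"
    and a_nz: "\<And>j. j < k \<Longrightarrow> a j \<noteq> 0" and c_nz: "\<And>j. 0 < j \<Longrightarrow> j < k \<Longrightarrow> c j \<noteq> 0"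
    and i: "i < k" and j: "j < k"
  shows "P i j = (if i = j then 1 else 0) \<and> Y i j = (if i = j then 1 else 0)"
proof -
  have "\<forall>i\<le>n. \<forall>j\<le>n. P i j = (if i = j then 1 else 0) \<and> Y i j = (if i = j then 1 else 0)"
    if "n < k" for n
    using that
  proof (induction n)
    case 0
    then show ?case using P_diag Y_diag by simp
  next
    case (Suc n)
    then have IH: "\<And>i j. i \<le> n \<Longrightarrow> j \<le> n \<Longrightarrow>
        P i j = (if i = j then 1 else 0) \<and> Y i j = (if i = j then 1 else 0)"
      by simp
    have P_new: "P i (Suc n) = 0" if i: "i \<le> n" for i
    proof -
      have "a i * (if i = n then 1 else 0) = a n * P i n + c (Suc n) * P i (Suc n)"
        using Z_Y[of i n] Z_P[of n i] IH[of i n] IH[of "i - 1" n] i Suc.prems by auto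
      then have "c (Suc n) * P i (Suc n) = 0"
        using IH[of i n] i by (auto split: if_splits)
      then show ?thesis using c_nz[of "Suc n"] Suc.prems by simp
    qed
    have Y_new: "Y (Suc n) i = 0" if i: "i \<le> n" for i
    proof -
      have "P (Suc n) (Suc i) = (if i = n then 1 else 0)"
        using P_new[of "Suc i"] P_sym[of "Suc n" "Suc i"] P_diag[of "Suc n"] i Suc.prems
        by (cases "i = n") auto
      then have "a (Suc n) * Y (Suc n) i + c (Suc n) * Y n i = c (Suc i) * (if i = n then 1 else 0)"
        using Z_Y[of "Suc n" i] Z_P[of i "Suc n"] P_new[OF i] P_sym[of "Suc n" i] i Suc.prems
        by simp
      then have "a (Suc n) * Y (Suc n) i = 0"
        using IH[of n i] i by (auto split: if_splits)
      then show ?thesis using a_nz[of "Suc n"] Suc.prems by simp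
    qed
    show ?case
    proof (intro allI impI)
      fix i j assume "i \<le> Suc n" and "j \<le> Suc n"
      then consider "i \<le> n" "j \<le> n" | "i = Suc n" "j \<le> n" | "i \<le> n" "j = Suc n" | "i = Suc n" "j = Suc n"
        by linarith
      then show "P i j = (if i = j then 1 else 0) \<and> Y i j = (if i = j then 1 else 0)"
        by cases (use IH P_new Y_new P_sym Y_sym P_diag Y_diag Suc.prems in auto)
    qed
  qed
  from this[of "max i j"] show ?thesis using i j by simp
qed

lemma lanczos_relation_of_bidiagonalization:
  fixes A :: "'a :: field mat"
  assumes A: "A \<in> carrier_mat m n" and M: "M \<in> carrier_mat m m" and Mi: "Mi \<in> carrier_mat m m"
    and C: "C \<in> carrier_mat n n" and N: "N \<in> carrier_mat n n" and Ni: "Ni \<in> carrier_mat n n"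
    and Q: "Q \<in> carrier_mat n k" and V: "V \<in> carrier_mat m k" and T: "T \<in> carrier_mat n k"
    and B: "B \<in> carrier_mat k k" and G: "G \<in> carrier_mat n 1" and E: "E \<in> carrier_mat 1 k"
    and Mi_M: "Mi * M = 1\<^sub>m m" and Ni_N: "Ni * N = 1\<^sub>m n"
    and AQ: "A * Q = M * V * B" and CQ: "C * Q = T * B"
    and AV: "transpose_mat A * V + T = N * Q * transpose_mat B + N * (G * E)"
    and EB: "E * B = c \<cdot>\<^sub>m E"
  shows "Ni * (transpose_mat A * Mi * A + C) * Q = Q * (transpose_mat B * B) + c \<cdot>\<^sub>m (G * E)"
proof -
  have At: "transpose_mat A \<in> carrier_mat n m" using A by simp
  have Bt: "transpose_mat B \<in> carrier_mat k k" using B by simp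
  have VB: "V * B \<in> carrier_mat m k" using V B by simp
  have AMA: "transpose_mat A * Mi * A \<in> carrier_mat n n" using At Mi A by simp
  have NQBt: "N * Q * transpose_mat B \<in> carrier_mat n k" using N Q Bt by simp
  have NGE: "N * (G * E) \<in> carrier_mat n k" using N G E by simp
  have "transpose_mat A * Mi * A * Q = transpose_mat A * (Mi * (A * Q))"
    by (simp only: assoc_mult_mat[OF At Mi A] assoc_mult_mat[OF At mult_carrier_mat[OF Mi A] Q]
        assoc_mult_mat[OF Mi A Q])
  also have "\<dots> = transpose_mat A * (Mi * M * (V * B))"
    unfolding AQ using M V B Mi by (simp add: assoc_mult_mat[OF Mi M VB])
  also have "\<dots> = transpose_mat A * V * B"
    unfolding Mi_M using At V B VB by simp
  finally have "(transpose_mat A * Mi * A + C) * Q = transpose_mat A * V * B + T * B"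
    using add_mult_distrib_mat[OF AMA C Q] CQ by simp
  also have "\<dots> = (transpose_mat A * V + T) * B"
    using add_mult_distrib_mat[OF _ T B, of "transpose_mat A * V"] At V by simp
  also have "\<dots> = N * Q * transpose_mat B * B + N * (G * E) * B"
    unfolding AV by (rule add_mult_distrib_mat[OF NQBt NGE B])
  also have "N * Q * transpose_mat B * B = N * (Q * (transpose_mat B * B))"
    using N Q Bt B by (simp add: assoc_mult_mat[of _ n n _ k])
  also have "N * (G * E) * B = N * (c \<cdot>\<^sub>m (G * E))"
    using N G E B EB mult_smult_distrib[OF G E]
    by (simp add: assoc_mult_mat[OF N mult_carrier_mat[OF G E] B] assoc_mult_mat[OF G E B])
  also have "N * (Q * (transpose_mat B * B)) + N * (c \<cdot>\<^sub>m (G * E)) =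
      N * (Q * (transpose_mat B * B) + c \<cdot>\<^sub>m (G * E))"
    using N Q Bt B G E by (intro mult_add_distrib_mat[symmetric, of _ n n _ k]) auto
  finally have SQ: "(transpose_mat A * Mi * A + C) * Q = N * (Q * (transpose_mat B * B) + c \<cdot>\<^sub>m (G * E))" .
  have S: "transpose_mat A * Mi * A + C \<in> carrier_mat n n" using AMA C by simp
  have R: "Q * (transpose_mat B * B) + c \<cdot>\<^sub>m (G * E) \<in> carrier_mat n k" using Q Bt B G E by simp
  have "Ni * (transpose_mat A * Mi * A + C) * Q = Ni * N * (Q * (transpose_mat B * B) + c \<cdot>\<^sub>m (G * E))"
    unfolding assoc_mult_mat[OF Ni S Q] SQ assoc_mult_mat[OF Ni N R] ..
  then show ?thesis unfolding Ni_N using left_mult_one_mat[OF R] by simp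
qed

declare craig.simps [simp del]

locale craig_setting =
  fixes m n :: nat and M A C N :: "real mat" and b :: "real vec"
  assumes M_spd: "spd m M" and A_carrier: "A \<in> carrier_mat m n" and C_spsd: "spsd n C"
    and N_spd: "spd n N" and b_carrier: "b \<in> carrier_vec n" and b_nonzero: "b \<noteq> 0\<^sub>v n"
begin

(* Indices are 0-based: the iterate with index j is the paper's iterate j + 1. *)

abbreviation "q j \<equiv> cq (craig M A C N b j)"
abbreviation "w j \<equiv> cw (craig M A C N b j)"
abbreviation "r j \<equiv> cr (craig M A C N b j)"
abbreviation "s j \<equiv> cs (craig M A C N b j)"
abbreviation "v j \<equiv> cv (craig M A C N b j)"
abbreviation "t j \<equiv> ct (craig M A C N b j)"
abbreviation "\<alpha> j \<equiv> calpha (craig M A C N b j)"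
abbreviation "\<beta> j \<equiv> cbeta (craig M A C N b j)"
abbreviation "d j \<equiv> (1 / \<alpha> j) \<cdot>\<^sub>v r j"
abbreviation "g j \<equiv> minv N *\<^sub>v (transpose_mat A *\<^sub>v v j + t j) - \<alpha> j \<cdot>\<^sub>v q j"

lemma craig_0:
  "q 0 = (1 / \<beta> 0) \<cdot>\<^sub>v (minv N *\<^sub>v b)" "\<beta> 0 = gnorm (minv N) b"
  "w 0 = minv M *\<^sub>v (A *\<^sub>v q 0)" "r 0 = q 0"
  by (simp_all add: craig.simps Let_def)

lemma craig_Suc:
  "q (Suc j) = (1 / \<beta> (Suc j)) \<cdot>\<^sub>v g j" "\<beta> (Suc j) = gnorm N (g j)"
  "w (Suc j) = minv M *\<^sub>v (A *\<^sub>v q (Suc j)) - \<beta> (Suc j) \<cdot>\<^sub>v v j"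
  "r (Suc j) = q (Suc j) - (\<beta> (Suc j) / \<alpha> j) \<cdot>\<^sub>v r j"
  by (simp_all add: craig.simps Let_def)

lemma craig_normalization:
  "s j = C *\<^sub>v r j" "\<alpha> j = sqrt (w j \<bullet> (M *\<^sub>v w j) + r j \<bullet> s j)"
  "v j = (1 / \<alpha> j) \<cdot>\<^sub>v w j" "t j = (1 / \<alpha> j) \<cdot>\<^sub>v s j"
  by (cases j; simp add: craig.simps Let_def)+

lemma craig_g_Suc: "craig_g M A C N b (Suc j) = g j"
  by (simp add: craig_g_def Let_def)

lemma M_carrier: "M \<in> carrier_mat m m" and M_sym: "transpose_mat M = M"
  using M_spd unfolding spd_def by auto

lemma N_carrier: "N \<in> carrier_mat n n" and N_sym: "transpose_mat N = N"
  using N_spd unfolding spd_def by auto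

lemma C_carrier: "C \<in> carrier_mat n n" and C_sym: "transpose_mat C = C"
  using C_spsd unfolding spsd_def by auto

lemma minv_M_carrier: "minv M \<in> carrier_mat m m"
  and minv_N_carrier: "minv N \<in> carrier_mat n n"
  using spd_minv(1) M_spd N_spd by auto

lemma craig_carrier:
  "q j \<in> carrier_vec n \<and> w j \<in> carrier_vec m \<and> r j \<in> carrier_vec n \<and>
   s j \<in> carrier_vec n \<and> v j \<in> carrier_vec m \<and> t j \<in> carrier_vec n"
  using minv_M_carrier minv_N_carrier A_carrier C_carrier b_carrier
  by (induction j) (simp_all add: craig_0 craig_Suc craig_normalization)

lemma q_carrier [simp]: "q j \<in> carrier_vec n" and w_carrier [simp]: "w j \<in> carrier_vec m"
  and r_carrier [simp]: "r j \<in> carrier_vec n" and s_carrier [simp]: "s j \<in> carrier_vec n"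
  and v_carrier [simp]: "v j \<in> carrier_vec m" and t_carrier [simp]: "t j \<in> carrier_vec n"
  using craig_carrier by auto

lemma craig_dim [simp]:
  "dim_vec (q j) = n" "dim_vec (w j) = m" "dim_vec (r j) = n"
  "dim_vec (s j) = n" "dim_vec (v j) = m" "dim_vec (t j) = n"
  using craig_carrier[of j] by auto

lemma g_carrier [simp]: "g j \<in> carrier_vec n"
  using minv_N_carrier A_carrier by simp

lemma M_minv_cancel: "x \<in> carrier_vec m \<Longrightarrow> M *\<^sub>v (minv M *\<^sub>v x) = x"
  using assoc_mult_mat_vec[OF M_carrier minv_M_carrier] spd_minv(2)[OF M_spd] by simp

lemma N_minv_cancel: "x \<in> carrier_vec n \<Longrightarrow> N *\<^sub>v (minv N *\<^sub>v x) = x"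
  using assoc_mult_mat_vec[OF N_carrier minv_N_carrier] spd_minv(2)[OF N_spd] by simp

lemma alpha_squared: "(\<alpha> j)\<^sup>2 = w j \<bullet> (M *\<^sub>v w j) + r j \<bullet> s j"
proof -
  have "0 \<le> w j \<bullet> (M *\<^sub>v w j)" by (rule spd_quadratic_form_nonneg[OF M_spd]) simp
  moreover have "0 \<le> r j \<bullet> s j"
    using C_spsd unfolding spsd_def craig_normalization(1) by simp
  ultimately show ?thesis by (simp add: craig_normalization(2))
qed

lemma t_eq_C_d: "t j = C *\<^sub>v d j"
  using mult_mat_vec[OF C_carrier r_carrier] by (simp add: craig_normalization)

lemma q_bidiag:
  assumes "\<alpha> j \<noteq> 0" and "0 < j \<Longrightarrow> \<alpha> (j - 1) \<noteq> 0"
  shows "q j = \<alpha> j \<cdot>\<^sub>v d j + (if j = 0 then 0\<^sub>v n else \<beta> j \<cdot>\<^sub>v d (j - 1))"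
  using assms by (cases j) (auto intro!: eq_vecI simp: craig_0(4) craig_Suc(4))

lemma A_q_bidiag:
  assumes "\<alpha> j \<noteq> 0"
  shows "A *\<^sub>v q j = \<alpha> j \<cdot>\<^sub>v (M *\<^sub>v v j) + (if j = 0 then 0\<^sub>v m else \<beta> j \<cdot>\<^sub>v (M *\<^sub>v v (j - 1)))"
proof -
  have "M *\<^sub>v w j = A *\<^sub>v q j - (if j = 0 then 0\<^sub>v m else \<beta> j \<cdot>\<^sub>v (M *\<^sub>v v (j - 1)))"
    using M_carrier minv_M_carrier A_carrier
    by (cases j)
      (simp_all add: craig_0(3) craig_Suc(3) mult_minus_distrib_mat_vec mult_mat_vec M_minv_cancel)
  moreover have "M *\<^sub>v v j = (1 / \<alpha> j) \<cdot>\<^sub>v (M *\<^sub>v w j)"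
    unfolding craig_normalization(3) by (rule mult_mat_vec[OF M_carrier w_carrier])
  ultimately show ?thesis
    using assms M_carrier A_carrier by (intro eq_vecI) auto
qed

lemma C_q_bidiag:
  assumes "\<alpha> j \<noteq> 0" and "0 < j \<Longrightarrow> \<alpha> (j - 1) \<noteq> 0"
  shows "C *\<^sub>v q j = \<alpha> j \<cdot>\<^sub>v t j + (if j = 0 then 0\<^sub>v n else \<beta> j \<cdot>\<^sub>v t (j - 1))"
proof -
  have "C *\<^sub>v q j = C *\<^sub>v (\<alpha> j \<cdot>\<^sub>v d j + (if j = 0 then 0\<^sub>v n else \<beta> j \<cdot>\<^sub>v d (j - 1)))"
    using q_bidiag[OF assms] by simp
  then show ?thesis
    using C_carrier by (cases j) (simp_all add: craig_normalization(1,4) mult_add_distrib_mat_vec mult_mat_vec)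
qed

lemma transpose_A_v_plus_t: "transpose_mat A *\<^sub>v v j + t j = N *\<^sub>v (\<alpha> j \<cdot>\<^sub>v q j + g j)"
  using N_carrier minv_N_carrier A_carrier
  by (intro eq_vecI) (auto simp: mult_add_distrib_mat_vec mult_minus_distrib_mat_vec N_minv_cancel)

lemma g_eq: "\<beta> (Suc j) \<noteq> 0 \<Longrightarrow> g j = \<beta> (Suc j) \<cdot>\<^sub>v q (Suc j)"
  by (intro eq_vecI) (auto simp: craig_Suc(1))

lemma scalar_prod_transpose_A_v_plus_t:
  assumes x: "x \<in> carrier_vec n"
  shows "x \<bullet> (transpose_mat A *\<^sub>v v j + t j) = (A *\<^sub>v x) \<bullet> v j + (C *\<^sub>v x) \<bullet> d j"
proof -
  have "x \<bullet> (transpose_mat A *\<^sub>v v j + t j) = x \<bullet> (transpose_mat A *\<^sub>v v j) + x \<bullet> t j"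
    using x A_carrier by (simp add: scalar_prod_add_distrib[of _ n])
  also have "x \<bullet> (transpose_mat A *\<^sub>v v j) = (A *\<^sub>v x) \<bullet> v j"
    by (rule scalar_prod_transpose_mat_vec[OF A_carrier x v_carrier])
  also have "x \<bullet> t j = (C *\<^sub>v x) \<bullet> d j"
    unfolding t_eq_C_d by (rule scalar_prod_sym_mat[OF C_carrier C_sym x, symmetric]) simp
  finally show ?thesis .
qed

lemma t_scalar_prod_d: "t i \<bullet> d j = d i \<bullet> t j"
  unfolding t_eq_C_d by (rule scalar_prod_sym_mat[OF C_carrier C_sym]) simp_all

lemma pairing_eq_vd_gram:
  assumes "\<alpha> i \<noteq> 0" and "0 < i \<Longrightarrow> \<alpha> (i - 1) \<noteq> 0"
  shows "q i \<bullet> (transpose_mat A *\<^sub>v v j + t j) =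
    \<alpha> i * (v i \<bullet> (M *\<^sub>v v j) + d i \<bullet> t j) +
    (if i = 0 then 0 else \<beta> i * (v (i - 1) \<bullet> (M *\<^sub>v v j) + d (i - 1) \<bullet> t j))"
proof -
  have "(A *\<^sub>v q i) \<bullet> v j = \<alpha> i * (v i \<bullet> (M *\<^sub>v v j)) +
      (if i = 0 then 0 else \<beta> i * (v (i - 1) \<bullet> (M *\<^sub>v v j)))"
    unfolding A_q_bidiag[OF assms(1)] using M_carrier
    by (cases i) (simp_all add: add_scalar_prod_distrib[of _ m] scalar_prod_sym_mat[OF M_carrier M_sym])
  moreover have "(C *\<^sub>v q i) \<bullet> d j = \<alpha> i * (d i \<bullet> t j) +
      (if i = 0 then 0 else \<beta> i * (d (i - 1) \<bullet> t j))"
  proof -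
    have "(C *\<^sub>v q i) \<bullet> x = \<alpha> i * (t i \<bullet> x) + (if i = 0 then 0 else \<beta> i * (t (i - 1) \<bullet> x))"
      if "x \<in> carrier_vec n" for x
      using C_q_bidiag[OF assms] that by (cases i) (simp_all add: add_scalar_prod_distrib[of _ n])
    from this[of "d j"] show ?thesis unfolding t_scalar_prod_d by simp
  qed
  ultimately show ?thesis
    unfolding scalar_prod_transpose_A_v_plus_t[OF q_carrier] by (simp add: distrib_left)
qed

lemma pairing_eq_q_gram:
  assumes "\<beta> (Suc j) \<noteq> 0" and "x \<in> carrier_vec n"
  shows "x \<bullet> (transpose_mat A *\<^sub>v v j + t j) =
    \<alpha> j * (x \<bullet> (N *\<^sub>v q j)) + \<beta> (Suc j) * (x \<bullet> (N *\<^sub>v q (Suc j)))"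
proof -
  have "transpose_mat A *\<^sub>v v j + t j = N *\<^sub>v (\<alpha> j \<cdot>\<^sub>v q j + \<beta> (Suc j) \<cdot>\<^sub>v q (Suc j))"
    using transpose_A_v_plus_t[of j] unfolding g_eq[OF assms(1)] .
  also have "\<dots> = \<alpha> j \<cdot>\<^sub>v (N *\<^sub>v q j) + \<beta> (Suc j) \<cdot>\<^sub>v (N *\<^sub>v q (Suc j))"
    using N_carrier by (simp add: mult_add_distrib_mat_vec mult_mat_vec)
  finally have "transpose_mat A *\<^sub>v v j + t j =
      \<alpha> j \<cdot>\<^sub>v (N *\<^sub>v q j) + \<beta> (Suc j) \<cdot>\<^sub>v (N *\<^sub>v q (Suc j))" .
  then show ?thesis
    using assms(2) N_carrier by (simp add: scalar_prod_add_distrib[of _ n])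
qed

lemma gram_v_d_diag:
  assumes "\<alpha> j \<noteq> 0"
  shows "v j \<bullet> (M *\<^sub>v v j) + d j \<bullet> t j = 1"
proof -
  have "v j \<bullet> (M *\<^sub>v v j) + d j \<bullet> t j = (w j \<bullet> (M *\<^sub>v w j) + r j \<bullet> s j) / (\<alpha> j)\<^sup>2"
    using M_carrier by (simp add: craig_normalization(3,4) mult_mat_vec power2_eq_square add_divide_distrib)
  then show ?thesis using assms unfolding alpha_squared[symmetric] by simp
qed

lemma gram_q_diag_0: "q 0 \<bullet> (N *\<^sub>v q 0) = 1"
proof -
  let ?x = "minv N *\<^sub>v b"
  have x: "?x \<in> carrier_vec n" using minv_N_carrier b_carrier by simp
  have Nx: "N *\<^sub>v ?x = b" using N_minv_cancel[OF b_carrier] .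
  moreover have "N *\<^sub>v 0\<^sub>v n = 0\<^sub>v n" using N_carrier by (intro eq_vecI) auto
  ultimately have "?x \<noteq> 0\<^sub>v n" using b_nonzero by auto
  then have "0 < ?x \<bullet> (N *\<^sub>v ?x)" using N_spd x unfolding spd_def by auto
  then have pos: "0 < b \<bullet> ?x" unfolding Nx using comm_scalar_prod[OF x b_carrier] by simp
  have "q 0 \<bullet> (N *\<^sub>v q 0) = (b \<bullet> ?x) / (\<beta> 0)\<^sup>2"
    unfolding craig_0(1) using N_carrier x b_carrier comm_scalar_prod[OF x b_carrier]
    by (simp add: mult_mat_vec Nx power2_eq_square)
  also have "(\<beta> 0)\<^sup>2 = b \<bullet> ?x"
    unfolding craig_0(2) gnorm_def using pos by simp
  finally show ?thesis using pos by simp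
qed

lemma gram_q_diag_Suc:
  assumes "\<beta> (Suc j) \<noteq> 0"
  shows "q (Suc j) \<bullet> (N *\<^sub>v q (Suc j)) = 1"
proof -
  have "q (Suc j) \<bullet> (N *\<^sub>v q (Suc j)) = g j \<bullet> (N *\<^sub>v g j) / (\<beta> (Suc j))\<^sup>2"
    unfolding craig_Suc(1) using N_carrier by (simp add: mult_mat_vec power2_eq_square)
  also have "(\<beta> (Suc j))\<^sup>2 = g j \<bullet> (N *\<^sub>v g j)"
    unfolding craig_Suc(2) gnorm_def using spd_quadratic_form_nonneg[OF N_spd g_carrier] by simp
  finally show ?thesis using assms craig_Suc(2) by (simp add: gnorm_def)
qed

context
  fixes k :: nat
  assumes alpha_nonzero: "\<forall>j<k. \<alpha> j \<noteq> 0" and beta_nonzero: "\<forall>j. 1 \<le> j \<and> j < k \<longrightarrow> \<beta> j \<noteq> 0"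
begin

lemma craig_orthonormal:
  assumes "i < k" and "j < k"
  shows "q i \<bullet> (N *\<^sub>v q j) = (if i = j then 1 else 0) \<and>
    v i \<bullet> (M *\<^sub>v v j) + d i \<bullet> t j = (if i = j then 1 else 0)"
proof (rule golub_kahan_orthonormality[where Z = "\<lambda>i j. q i \<bullet> (transpose_mat A *\<^sub>v v j + t j)"
      and a = \<alpha> and c = \<beta> and k = k])
  show "q i \<bullet> (N *\<^sub>v q j) = q j \<bullet> (N *\<^sub>v q i)" for i j
    by (rule scalar_prod_sym_mat_comm[OF N_carrier N_sym]) simp_all
  show "v i \<bullet> (M *\<^sub>v v j) + d i \<bullet> t j = v j \<bullet> (M *\<^sub>v v i) + d j \<bullet> t i" for i j
    using scalar_prod_sym_mat_comm[OF M_carrier M_sym v_carrier v_carrier] t_scalar_prod_d[of j i]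
      comm_scalar_prod[of "t j" n "d i"] by simp
  show "q i \<bullet> (transpose_mat A *\<^sub>v v j + t j) = \<alpha> i * (v i \<bullet> (M *\<^sub>v v j) + d i \<bullet> t j) +
      (if i = 0 then 0 else \<beta> i * (v (i - 1) \<bullet> (M *\<^sub>v v j) + d (i - 1) \<bullet> t j))"
    if "i < k" for i j
    using that alpha_nonzero by (intro pairing_eq_vd_gram) auto
  show "q i \<bullet> (transpose_mat A *\<^sub>v v j + t j) =
      \<alpha> j * (q i \<bullet> (N *\<^sub>v q j)) + \<beta> (Suc j) * (q i \<bullet> (N *\<^sub>v q (Suc j)))"
    if "Suc j < k" for i j
    using that beta_nonzero by (intro pairing_eq_q_gram) auto
  show "q j \<bullet> (N *\<^sub>v q j) = 1" if "j < k" for j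
    using that beta_nonzero gram_q_diag_0 gram_q_diag_Suc by (cases j) auto
  show "v j \<bullet> (M *\<^sub>v v j) + d j \<bullet> t j = 1" if "j < k" for j
    using that alpha_nonzero gram_v_d_diag by auto
qed (use assms alpha_nonzero beta_nonzero in auto)

abbreviation "Q \<equiv> mat_of_cols n (map (\<lambda>j. q j) [0..<k])"
abbreviation "V \<equiv> mat_of_cols m (map (\<lambda>j. v j) [0..<k])"
abbreviation "T \<equiv> mat_of_cols n (map (\<lambda>j. t j) [0..<k])"
abbreviation "D \<equiv> mat_of_cols n (map (\<lambda>j. d j) [0..<k])"
abbreviation "B \<equiv> upper_bidiag k (\<lambda>j. \<alpha> j) (\<lambda>j. \<beta> j)"

lemma Q_carrier: "Q \<in> carrier_mat n k" and V_carrier: "V \<in> carrier_mat m k"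
  and T_carrier: "T \<in> carrier_mat n k" and D_carrier: "D \<in> carrier_mat n k"
  by (rule carrier_matI; simp)+

lemma Q_eq_D_B: "Q = D * B"
proof (rule mat_col_eqI)
  fix j assume "j < dim_col (D * B)"
  then have j: "j < k" by simp
  have "col (D * B) j = \<alpha> j \<cdot>\<^sub>v d j + (if j = 0 then 0\<^sub>v n else \<beta> j \<cdot>\<^sub>v d (j - 1))"
    using col_mult_upper_bidiag[OF D_carrier j] j by (cases j) simp_all
  also have "\<dots> = q j"
    using j alpha_nonzero by (intro q_bidiag[symmetric]) auto
  finally show "col Q j = col (D * B) j" using j by simp
qed simp_all

lemma A_Q_eq_M_V_B: "A * Q = M * V * B"
proof (rule mat_col_eqI)
  fix j assume "j < dim_col (M * V * B)"
  then have j: "j < k" by simp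
  have MV: "M * V \<in> carrier_mat m k" using M_carrier V_carrier by simp
  have "col (M * V * B) j =
      \<alpha> j \<cdot>\<^sub>v (M *\<^sub>v v j) + (if j = 0 then 0\<^sub>v m else \<beta> j \<cdot>\<^sub>v (M *\<^sub>v v (j - 1)))"
    using col_mult_upper_bidiag[OF MV j] j col_mult2[OF M_carrier V_carrier]
    by (cases j) (simp_all del: col_mult)
  also have "\<dots> = A *\<^sub>v q j"
    using j alpha_nonzero by (intro A_q_bidiag[symmetric]) auto
  finally show "col (A * Q) j = col (M * V * B) j"
    using j col_mult2[OF A_carrier Q_carrier j] by (simp del: col_mult)
qed (use A_carrier M_carrier in simp_all)

lemma C_Q_eq_T_B: "C * Q = T * B"
proof (rule mat_col_eqI)
  fix j assume "j < dim_col (T * B)"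
  then have j: "j < k" by simp
  have "col (T * B) j = \<alpha> j \<cdot>\<^sub>v t j + (if j = 0 then 0\<^sub>v n else \<beta> j \<cdot>\<^sub>v t (j - 1))"
    using col_mult_upper_bidiag[OF T_carrier j] j by (cases j) simp_all
  also have "\<dots> = C *\<^sub>v q j"
    using j alpha_nonzero by (intro C_q_bidiag[symmetric]) auto
  finally show "col (C * Q) j = col (T * B) j"
    using j col_mult2[OF C_carrier Q_carrier j] by (simp del: col_mult)
qed (use C_carrier in simp_all)

lemma gram_V_D_eq_1: "transpose_mat V * M * V + transpose_mat D * T = 1\<^sub>m k"
proof (rule eq_matI)
  fix i j assume "i < dim_row (1\<^sub>m k :: real mat)" and "j < dim_col (1\<^sub>m k :: real mat)"
  then have i: "i < k" and j: "j < k" by auto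
  have "(transpose_mat V * M * V) $$ (i, j) = v i \<bullet> (M *\<^sub>v v j)"
    using index_transpose_mult_mult[OF V_carrier M_carrier V_carrier i j] i j by simp
  moreover have "(transpose_mat D * T) $$ (i, j) = d i \<bullet> t j"
    using i j by simp
  ultimately show "(transpose_mat V * M * V + transpose_mat D * T) $$ (i, j) = 1\<^sub>m k $$ (i, j)"
    using craig_orthonormal[OF i j] i j M_carrier by simp
qed (use M_carrier in simp_all)

lemma gram_Q_eq_1: "transpose_mat Q * N * Q = 1\<^sub>m k"
proof (rule eq_matI)
  fix i j assume "i < dim_row (1\<^sub>m k :: real mat)" and "j < dim_col (1\<^sub>m k :: real mat)"
  then have i: "i < k" and j: "j < k" by auto
  show "(transpose_mat Q * N * Q) $$ (i, j) = 1\<^sub>m k $$ (i, j)"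
    using index_transpose_mult_mult[OF Q_carrier N_carrier Q_carrier i j] craig_orthonormal[OF i j] i j
    by simp
qed (use N_carrier in simp_all)



lemma col_Q_Bt_plus_residual:
  assumes k: "1 \<le> k" and j: "j < k"
  shows "col (Q * transpose_mat B) j +
    col (mat_of_cols n [g (k - 1)] * mat_of_rows k [unit_vec k (k - 1)]) j = \<alpha> j \<cdot>\<^sub>v q j + g j"
proof -
  have col_QBt: "col (Q * transpose_mat B) j =
      \<alpha> j \<cdot>\<^sub>v q j + (if Suc j < k then \<beta> (Suc j) \<cdot>\<^sub>v q (Suc j) else 0\<^sub>v n)"
    using col_mult_transpose_upper_bidiag[OF Q_carrier j] j by simp
  have col_GE: "col (mat_of_cols n [g (k - 1)] * mat_of_rows k [unit_vec k (k - 1)]) j =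
      (if j = k - 1 then g (k - 1) else 0\<^sub>v n)"
    using col_outer_unit_vec[of "g (k - 1)" n "k - 1" k j] j k by simp
  show ?thesis
  proof (cases "Suc j < k")
    case True
    then show ?thesis using beta_nonzero g_eq[of j] unfolding col_QBt col_GE by auto
  next
    case False
    then show ?thesis using j unfolding col_QBt col_GE by auto
  qed
qed

lemma transpose_A_V_plus_T_eq:
  assumes k: "1 \<le> k"
  shows "transpose_mat A * V + T =
    N * Q * transpose_mat B + N * (mat_of_cols n [g (k - 1)] * mat_of_rows k [unit_vec k (k - 1)])"
    (is "_ = N * Q * transpose_mat B + N * ?GE")
proof (rule mat_col_eqI)
  fix j assume "j < dim_col (N * Q * transpose_mat B + N * ?GE)"
  then have j: "j < k" by simp
  have GE: "?GE \<in> carrier_mat n k"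
    using mat_of_cols_carrier(1)[of n "[g (k - 1)]"] mat_of_rows_carrier(1)[of k "[unit_vec k (k - 1)]"]
    by (intro mult_carrier_mat[of _ n 1]) simp_all
  have Bt: "transpose_mat B \<in> carrier_mat k k" by simp
  have At: "transpose_mat A \<in> carrier_mat n m" using A_carrier by simp
  have QBt: "Q * transpose_mat B \<in> carrier_mat n k" using Q_carrier by simp
  have "col (N * Q * transpose_mat B + N * ?GE) j =
      N *\<^sub>v col (Q * transpose_mat B) j + N *\<^sub>v col ?GE j"
    using j N_carrier QBt GE assoc_mult_mat[OF N_carrier Q_carrier Bt]
      col_add[OF mult_carrier_mat[OF N_carrier QBt] mult_carrier_mat[OF N_carrier GE] j]
    by (simp del: col_mult add: col_mult2)
  also have "\<dots> = N *\<^sub>v (col (Q * transpose_mat B) j + col ?GE j)"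
    using j QBt GE by (intro mult_add_distrib_mat_vec[OF N_carrier, symmetric]) simp_all
  also have "\<dots> = transpose_mat A *\<^sub>v v j + t j"
    unfolding col_Q_Bt_plus_residual[OF k j] by (rule transpose_A_v_plus_t[symmetric])
  also have "\<dots> = col (transpose_mat A * V + T) j"
    using col_add[OF mult_carrier_mat[OF At V_carrier] T_carrier j] col_mult2[OF At V_carrier j] j
    by (simp del: col_mult)
  finally show "col (transpose_mat A * V + T) j = col (N * Q * transpose_mat B + N * ?GE) j"
    by (rule sym)
qed (use A_carrier N_carrier in simp_all)

end

end

theorem mainTheorem2:
  fixes m n k :: nat and M A C N :: "real mat" and b :: "real vec"
  assumes "n \<le> m"
    and "spd m M" and "full_col_rank m n A" and "spsd n C" and "spd n N"
    and "b \<in> carrier_vec n" and "b \<noteq> 0\<^sub>v n"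
    and "k \<ge> 1"
    and "\<forall>j<k. calpha (craig M A C N b j) \<noteq> 0"
    and "\<forall>j. 1 \<le> j \<and> j < k \<longrightarrow> cbeta (craig M A C N b j) \<noteq> 0"
  defines "Q \<equiv> mat_of_cols n (map (\<lambda>j. cq (craig M A C N b j)) [0..<k])"
    and "V \<equiv> mat_of_cols m (map (\<lambda>j. cv (craig M A C N b j)) [0..<k])"
    and "T \<equiv> mat_of_cols n (map (\<lambda>j. ct (craig M A C N b j)) [0..<k])"
    and "D \<equiv> mat_of_cols n (map (\<lambda>j. (1 / calpha (craig M A C N b j)) \<cdot>\<^sub>v cr (craig M A C N b j)) [0..<k])"
    and "B \<equiv> mat k k (\<lambda>(i, j). if j = i then calpha (craig M A C N b i)
                              else if j = i + 1 then cbeta (craig M A C N b j) else 0)"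
  shows "Q = D * B \<and>
         A * Q = M * V * B \<and>
         C * Q = T * B \<and>
         transpose_mat V * M * V + transpose_mat D * T = 1\<^sub>m k \<and>
         transpose_mat Q * N * Q = 1\<^sub>m k \<and>
         transpose_mat A * V + T = N * Q * transpose_mat B + N * (mat_of_cols n [craig_g M A C N b k] * mat_of_rows k [unit_vec k (k - 1)]) \<and>
         minv N * (transpose_mat A * minv M * A + C) * Q = Q * (transpose_mat B * B) + calpha (craig M A C N b (k - 1)) \<cdot>\<^sub>m (mat_of_cols n [craig_g M A C N b k] * mat_of_rows k [unit_vec k (k - 1)])"
proof -
  (* n \<le> m and the rank of A only matter for the uniqueness of the saddle point solution. *)
  have "A \<in> carrier_mat m n" using assms(3) unfolding full_col_rank_def by simp
  then interpret craig_setting m n M A C N b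
    using assms by unfold_locales auto
  note alpha = assms(9) and beta = assms(10)
  have B_eq: "B = upper_bidiag k (\<lambda>j. \<alpha> j) (\<lambda>j. \<beta> j)"
    unfolding B_def upper_bidiag_def ..
  have g_last: "craig_g M A C N b k = g (k - 1)"
    using craig_g_Suc[of "k - 1"] assms(8) by simp
  have G: "mat_of_cols n [g (k - 1)] \<in> carrier_mat n 1"
    using mat_of_cols_carrier(1)[of n "[g (k - 1)]"] by simp
  have E: "mat_of_rows k [unit_vec k (k - 1)] \<in> carrier_mat 1 k"
    using mat_of_rows_carrier(1)[of k "[unit_vec k (k - 1)]"] by simp
  note AQ = A_Q_eq_M_V_B[OF alpha beta] and CQ = C_Q_eq_T_B[OF alpha beta]
    and AV = transpose_A_V_plus_T_eq[OF alpha beta assms(8)]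
  have lanczos: "minv N * (transpose_mat A * minv M * A + C) * Q =
      Q * (transpose_mat B * B) + \<alpha> (k - 1) \<cdot>\<^sub>m (mat_of_cols n [g (k - 1)] * mat_of_rows k [unit_vec k (k - 1)])"
    unfolding Q_def B_eq
    by (rule lanczos_relation_of_bidiagonalization[OF A_carrier M_carrier minv_M_carrier C_carrier
          N_carrier minv_N_carrier Q_carrier[OF alpha beta] V_carrier[OF alpha beta]
          T_carrier[OF alpha beta] upper_bidiag_carrier G E
          spd_minv(3)[OF M_spd] spd_minv(3)[OF N_spd] AQ CQ AV
          last_unit_row_mult_upper_bidiag[OF assms(8)]])
  show ?thesis
    using Q_eq_D_B[OF alpha beta] AQ CQ gram_V_D_eq_1[OF alpha beta] gram_Q_eq_1[OF alpha beta] AV lanczos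
    unfolding g_last Q_def V_def T_def D_def B_eq by blast
qed

end
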